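(* Let $X$ be a Tychonoff space. The following are equivalent: (1) $C_k(X)$ is strictly H-bounded; (2) $C_k(X)$ is H-bounded; (3) $C_k(X)$ is strictly M-bounded; (4) $C_k(X)$ is M-bounded; (5) $X$ is pseudocompact and every compact subset of $X$ is finite.
   Context: $C(X)$ is the set of continuous real-valued functions on $X$, a topological group under pointwise addition with identity the zero function. $C_k(X)$ is $C(X)$ with the compact-open topology (basic neighborhoods of $f$: $\{g:|g(x)-f(x)|<\varepsilon\ \forall x\in K\}$, $K$ compact, $\varepsilon>0$). For a topological group $G$ with identity $e$: $G$ is M-bounded if for every sequence $(U_n)$ of neighborhoods of $e$ there are finite $A_n\subset G$ with $G=\bigcup_n A_nU_n$; H-bounded if for every such sequence there are finite $A_n$ with each $x\in G$ in all but finitely many $A_nU_n$. In the M-game, in round $n$ ONE chooses a neighborhood $U_n$ of $e$ and TWO a finite $A_n\subset G$; TWO wins if $G=\bigcup_nA_nU_n$; $G$ is strictly M-bounded if TWO has a winning strategy. Strictly H-bounded: same game, TWO wins if each $x\in G$ lies in all but finitely many $A_nU_n$, and TWO has a winning strategy. *)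

theory Defs
  imports "HOL-Analysis.Analysis"
begin

definition tychonoff_space :: "'a topology \<Rightarrow> bool" where
  "tychonoff_space X \<longleftrightarrow> completely_regular_space X \<and> Hausdorff_space X"

text \<open>C(X): continuous real-valued functions on X, represented canonically
  (extensionally, value 0 outside the carrier of X).\<close>
definition Cfun :: "'a topology \<Rightarrow> ('a \<Rightarrow> real) set" where
  "Cfun X = {f. continuous_map X euclideanreal f \<and> (\<forall>x. x \<notin> topspace X \<longrightarrow> f x = 0)}"

text \<open>Neighbourhoods of the zero function in C_k(X) (compact-open topology):
  subsets of C(X) containing a basic set {g. |g x| < eps on K}, K compact.\<close>
definition nhd0_k :: "'a topology \<Rightarrow> ('a \<Rightarrow> real) set \<Rightarrow> bool" where
  "nhd0_k X U \<longleftrightarrow> U \<subseteq> Cfun X \<and>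
     (\<exists>K \<epsilon>. compactin X K \<and> \<epsilon> > 0 \<and> {g \<in> Cfun X. \<forall>x\<in>K. \<bar>g x\<bar> < \<epsilon>} \<subseteq> U)"

definition gset_add :: "('a \<Rightarrow> real) set \<Rightarrow> ('a \<Rightarrow> real) set \<Rightarrow> ('a \<Rightarrow> real) set" where
  "gset_add A U = {(\<lambda>x. a x + u x) | a u. a \<in> A \<and> u \<in> U}"

definition M_bounded_Ck :: "'a topology \<Rightarrow> bool" where
  "M_bounded_Ck X \<longleftrightarrow>
    (\<forall>U :: nat \<Rightarrow> ('a \<Rightarrow> real) set. (\<forall>n. nhd0_k X (U n)) \<longrightarrow>
      (\<exists>A :: nat \<Rightarrow> ('a \<Rightarrow> real) set. (\<forall>n. finite (A n) \<and> A n \<subseteq> Cfun X) \<and>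
         Cfun X = (\<Union>n. gset_add (A n) (U n))))"

definition H_bounded_Ck :: "'a topology \<Rightarrow> bool" where
  "H_bounded_Ck X \<longleftrightarrow>
    (\<forall>U :: nat \<Rightarrow> ('a \<Rightarrow> real) set. (\<forall>n. nhd0_k X (U n)) \<longrightarrow>
      (\<exists>A :: nat \<Rightarrow> ('a \<Rightarrow> real) set. (\<forall>n. finite (A n) \<and> A n \<subseteq> Cfun X) \<and>
         (\<forall>f \<in> Cfun X. \<forall>\<^sub>F n in sequentially. f \<in> gset_add (A n) (U n))))"

text \<open>Strategies for TWO: a strategy maps the list of ONE's moves so far
  (U_0, ..., U_n) to TWO's answer A_n.  (TWO's own earlier moves are determined
  by the strategy, so this loses no generality.)\<close>
definition strictly_M_bounded_Ck :: "'a topology \<Rightarrow> bool" where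
  "strictly_M_bounded_Ck X \<longleftrightarrow>
    (\<exists>\<sigma> :: ('a \<Rightarrow> real) set list \<Rightarrow> ('a \<Rightarrow> real) set.
      \<forall>U :: nat \<Rightarrow> ('a \<Rightarrow> real) set. (\<forall>n. nhd0_k X (U n)) \<longrightarrow>
        (\<forall>n. finite (\<sigma> (map U [0..<Suc n])) \<and> \<sigma> (map U [0..<Suc n]) \<subseteq> Cfun X) \<and>
        Cfun X = (\<Union>n. gset_add (\<sigma> (map U [0..<Suc n])) (U n)))"

definition strictly_H_bounded_Ck :: "'a topology \<Rightarrow> bool" where
  "strictly_H_bounded_Ck X \<longleftrightarrow>
    (\<exists>\<sigma> :: ('a \<Rightarrow> real) set list \<Rightarrow> ('a \<Rightarrow> real) set.
      \<forall>U :: nat \<Rightarrow> ('a \<Rightarrow> real) set. (\<forall>n. nhd0_k X (U n)) \<longrightarrow>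
        (\<forall>n. finite (\<sigma> (map U [0..<Suc n])) \<and> \<sigma> (map U [0..<Suc n]) \<subseteq> Cfun X) \<and>
        (\<forall>f \<in> Cfun X. \<forall>\<^sub>F n in sequentially. f \<in> gset_add (\<sigma> (map U [0..<Suc n])) (U n)))"

definition pseudocompact :: "'a topology \<Rightarrow> bool" where
  "pseudocompact X \<longleftrightarrow>
    (\<forall>f. continuous_map X euclideanreal f \<longrightarrow> (\<exists>B. \<forall>x\<in>topspace X. \<bar>f x\<bar> \<le> B))"

end

theory Submission
  imports Defs "HOL-Library.Nat_Bijection"
begin

text \<open>
  If X is pseudocompact and its compact sets are finite, TWO wins the H-game: ONE's neighbourhood
  in round n contains a set {g. |g| < \<epsilon> on K} with K finite, and by interpolating grid values
  on K, TWO answers with a finite \<epsilon>-net for the functions bounded by n on K; since every f is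
  bounded, f lies in A_n + U_n for all large n.

  Conversely, M-boundedness yields, for any compact sets K_n and any \<epsilon>_n > 0, finite sets A_n
  such that every f is \<epsilon>_n-close on K_n to some member of A_n. An unbounded continuous function,
  or an accumulation point of an infinite compact set, provides points x_k with bump functions of
  pairwise disjoint supports; choosing the values s_k by diagonalisation against the A_n, the sum
  of the bumps s_k \<phi>_k is continuous (by local finiteness, resp. because s_k tends to 0) and
  escapes every A_n + U_n.
\<close>

lemma Cfun_add: "f \<in> Cfun X \<Longrightarrow> g \<in> Cfun X \<Longrightarrow> (\<lambda>x. f x + g x) \<in> Cfun X"
  by (auto simp: Cfun_def intro: continuous_map_add)

lemma Cfun_diff: "f \<in> Cfun X \<Longrightarrow> g \<in> Cfun X \<Longrightarrow> (\<lambda>x. f x - g x) \<in> Cfun X"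
  by (auto simp: Cfun_def intro: continuous_map_diff)

lemma Cfun_cmult: "f \<in> Cfun X \<Longrightarrow> (\<lambda>x. c * f x) \<in> Cfun X"
  by (auto simp: Cfun_def intro: continuous_map_real_mult_left)

lemma Cfun_sum:
  "finite I \<Longrightarrow> (\<And>i. i \<in> I \<Longrightarrow> f i \<in> Cfun X) \<Longrightarrow> (\<lambda>x. \<Sum>i\<in>I. f i x) \<in> Cfun X"
  by (auto simp: Cfun_def intro!: continuous_map_sum)

lemma gset_add_subset_Cfun: "A \<subseteq> Cfun X \<Longrightarrow> U \<subseteq> Cfun X \<Longrightarrow> gset_add A U \<subseteq> Cfun X"
  by (auto simp: gset_add_def intro!: Cfun_add)

lemma gset_addI: "a \<in> A \<Longrightarrow> (\<lambda>x. f x - a x) \<in> U \<Longrightarrow> f \<in> gset_add A U"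
  unfolding gset_add_def by force

lemma gset_addE:
  assumes "f \<in> gset_add A U"
  obtains a where "a \<in> A" "(\<lambda>x. f x - a x) \<in> U"
  using assms unfolding gset_add_def by force

lemma nhd0_k_basic: "compactin X K \<Longrightarrow> \<epsilon> > 0 \<Longrightarrow> nhd0_k X {g \<in> Cfun X. \<forall>x\<in>K. \<bar>g x\<bar> < \<epsilon>}"
  unfolding nhd0_k_def by blast

lemma completely_regular_bump:
  assumes "completely_regular_space X" "openin X V" "x \<in> V"
  obtains \<phi> where "\<phi> \<in> Cfun X" "\<phi> x = 1" "\<And>y. y \<notin> V \<Longrightarrow> \<phi> y = 0" "\<And>y. \<bar>\<phi> y\<bar> \<le> 1"
proof -
  have "x \<in> topspace X - (topspace X - V)"
    using assms openin_subset by auto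
  with assms obtain f :: "'a \<Rightarrow> real" where f: "continuous_map X (top_of_set {0..1}) f"
    "f x = 0" "f ` (topspace X - V) \<subseteq> {1}"
    unfolding completely_regular_space_def by (metis closedin_diff closedin_topspace)
  define \<phi> where "\<phi> y = (if y \<in> topspace X then 1 - f y else 0)" for y
  have "continuous_map X euclideanreal (\<lambda>y. 1 - f y)"
    using f(1) by (auto simp: continuous_map_in_subtopology intro!: continuous_map_diff)
  then have "continuous_map X euclideanreal \<phi>"
    by (rule continuous_map_eq) (auto simp: \<phi>_def)
  moreover have "f y \<in> {0..1}" if "y \<in> topspace X" for y
    using f(1) that by (auto simp: continuous_map_def)
  moreover have "\<phi> y = 0" if "y \<notin> V" for y
    using f that by (auto simp: \<phi>_def)
  ultimately show ?thesis
    using that[of \<phi>] f \<open>x \<in> topspace X - _\<close> by (auto simp: Cfun_def \<phi>_def)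
qed

lemma Cfun_interpolate:
  assumes "completely_regular_space X" "Hausdorff_space X" "finite K" "K \<subseteq> topspace X"
  obtains a where "a \<in> Cfun X" "\<And>x. x \<in> K \<Longrightarrow> a x = c x"
proof -
  have "\<exists>e. e \<in> Cfun X \<and> e x = 1 \<and> (\<forall>y\<in>K - {x}. e y = 0)" if "x \<in> K" for x
  proof -
    have "openin X (topspace X - (K - {x}))"
      using assms closedin_Hausdorff_finite[of X "K - {x}"] by auto
    then show ?thesis
      using that assms(4) by (elim completely_regular_bump[OF assms(1)]) auto
  qed
  then obtain e where e: "\<And>x. x \<in> K \<Longrightarrow> e x \<in> Cfun X \<and> e x x = 1 \<and> (\<forall>y\<in>K - {x}. e x y = 0)"
    by metis
  define a where "a y = (\<Sum>x\<in>K. c x * e x y)" for y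
  have "a y = c y" if "y \<in> K" for y
  proof -
    have "a y = c y * e y y + (\<Sum>x\<in>K - {y}. c x * e x y)"
      unfolding a_def using assms(3) that by (simp add: sum.remove)
    moreover have "(\<Sum>x\<in>K - {y}. c x * e x y) = 0"
      using e that by (intro sum.neutral) auto
    ultimately show ?thesis
      using e that by simp
  qed
  moreover have "a \<in> Cfun X"
    unfolding a_def using assms(3) e by (auto intro!: Cfun_sum Cfun_cmult)
  ultimately show ?thesis using that by blast
qed

lemma floor_grid_approx:
  fixes y \<epsilon> :: real
  assumes "\<epsilon> > 0" "\<bar>y\<bar> \<le> r"
  shows "\<lfloor>y / \<epsilon>\<rfloor> \<in> {-(\<lceil>r / \<epsilon>\<rceil> + 1)..\<lceil>r / \<epsilon>\<rceil> + 1}" and "\<bar>y - \<lfloor>y / \<epsilon>\<rfloor> * \<epsilon>\<bar> < \<epsilon>"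
proof -
  have "- (r / \<epsilon>) \<le> y / \<epsilon>" "y / \<epsilon> \<le> r / \<epsilon>"
    using assms by (auto simp: field_simps)
  then show "\<lfloor>y / \<epsilon>\<rfloor> \<in> {-(\<lceil>r / \<epsilon>\<rceil> + 1)..\<lceil>r / \<epsilon>\<rceil> + 1}"
    by (auto simp: le_floor_iff floor_le_iff) linarith+
  have "\<lfloor>y / \<epsilon>\<rfloor> * \<epsilon> \<le> y" "y < (\<lfloor>y / \<epsilon>\<rfloor> + 1) * \<epsilon>"
    using assms(1) by (simp_all add: pos_le_divide_eq [symmetric] pos_divide_less_eq [symmetric])
  then show "\<bar>y - \<lfloor>y / \<epsilon>\<rfloor> * \<epsilon>\<bar> < \<epsilon>"
    by (simp add: algebra_simps)
qed

lemma Cfun_finite_net: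
  assumes "completely_regular_space X" "Hausdorff_space X" "finite K" "K \<subseteq> topspace X" "\<epsilon> > 0"
  obtains A where "finite A" "A \<subseteq> Cfun X"
    "\<And>f. (\<And>x. x \<in> K \<Longrightarrow> \<bar>f x\<bar> \<le> r) \<Longrightarrow> \<exists>a\<in>A. \<forall>x\<in>K. \<bar>f x - a x\<bar> < \<epsilon>"
proof -
  define J where "J = \<lceil>r / \<epsilon>\<rceil> + 1"
  define G where "G = (\<lambda>j. real_of_int j * \<epsilon>) ` {-J..J}"
  have "\<exists>a. a \<in> Cfun X \<and> (\<forall>x\<in>K. a x = c x)" for c
    by (rule Cfun_interpolate[OF assms(1-4), where c = c]) blast
  then obtain interp where interp: "\<And>c. interp c \<in> Cfun X" "\<And>c x. x \<in> K \<Longrightarrow> interp c x = c x"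
    by metis
  show ?thesis
  proof (rule that[of "interp ` (K \<rightarrow>\<^sub>E G)"])
    show "finite (interp ` (K \<rightarrow>\<^sub>E G))"
      using assms(3) by (auto simp: G_def intro!: finite_PiE)
    show "interp ` (K \<rightarrow>\<^sub>E G) \<subseteq> Cfun X"
      using interp(1) by blast
    fix f assume f: "\<And>x. x \<in> K \<Longrightarrow> \<bar>f x\<bar> \<le> r"
    define c where "c = restrict (\<lambda>x. \<lfloor>f x / \<epsilon>\<rfloor> * \<epsilon>) K"
    have "c \<in> K \<rightarrow>\<^sub>E G"
      using floor_grid_approx(1)[OF assms(5) f] by (auto simp: c_def G_def J_def)
    moreover have "\<forall>x\<in>K. \<bar>f x - interp c x\<bar> < \<epsilon>"
      using floor_grid_approx(2)[OF assms(5) f] interp(2) by (simp add: c_def)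
    ultimately show "\<exists>a\<in>interp ` (K \<rightarrow>\<^sub>E G). \<forall>x\<in>K. \<bar>f x - a x\<bar> < \<epsilon>"
      by blast
  qed
qed

lemma nhd0_k_finite_net:
  assumes X: "tychonoff_space X" and F: "\<forall>K. compactin X K \<longrightarrow> finite K" and U: "nhd0_k X U"
  obtains A where "finite A" "A \<subseteq> Cfun X"
    "\<forall>f\<in>Cfun X. (\<forall>x\<in>topspace X. \<bar>f x\<bar> \<le> r) \<longrightarrow> f \<in> gset_add A U"
proof -
  obtain K \<epsilon> where K: "compactin X K" and "\<epsilon> > 0"
    and KU: "{g\<in>Cfun X. \<forall>x\<in>K. \<bar>g x\<bar> < \<epsilon>} \<subseteq> U"
    using U unfolding nhd0_k_def by blast
  moreover have "finite K" "K \<subseteq> topspace X"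
    using K F compactin_subset_topspace by auto
  ultimately obtain A where A: "finite A" "A \<subseteq> Cfun X"
    and net: "\<And>f. (\<And>x. x \<in> K \<Longrightarrow> \<bar>f x\<bar> \<le> r) \<Longrightarrow> \<exists>a\<in>A. \<forall>x\<in>K. \<bar>f x - a x\<bar> < \<epsilon>"
    using X Cfun_finite_net[of X K \<epsilon> r] unfolding tychonoff_space_def by blast
  show ?thesis
  proof (rule that[OF A], intro ballI impI)
    fix f assume f: "f \<in> Cfun X" and r: "\<forall>x\<in>topspace X. \<bar>f x\<bar> \<le> r"
    then obtain a where a: "a \<in> A" "\<forall>x\<in>K. \<bar>f x - a x\<bar> < \<epsilon>"
      using net \<open>K \<subseteq> topspace X\<close> by blast
    then have "(\<lambda>x. f x - a x) \<in> U"
      using KU f A(2) Cfun_diff by blast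
    with a(1) show "f \<in> gset_add A U"
      by (rule gset_addI)
  qed
qed

lemma pseudocompact_finite_compacts_imp_strictly_H_bounded_Ck:
  assumes X: "tychonoff_space X" and P: "pseudocompact X" and F: "\<forall>K. compactin X K \<longrightarrow> finite K"
  shows "strictly_H_bounded_Ck X"
proof -
  define net where "net n U = (SOME A. finite A \<and> A \<subseteq> Cfun X \<and>
      (\<forall>f\<in>Cfun X. (\<forall>x\<in>topspace X. \<bar>f x\<bar> \<le> real n) \<longrightarrow> f \<in> gset_add A U))" for n U
  have net: "finite (net n U) \<and> net n U \<subseteq> Cfun X \<and>
      (\<forall>f\<in>Cfun X. (\<forall>x\<in>topspace X. \<bar>f x\<bar> \<le> real n) \<longrightarrow> f \<in> gset_add (net n U) U)"
    if "nhd0_k X U" for n U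
    unfolding net_def
    by (rule nhd0_k_finite_net[OF X F that, where r = "real n"], rule someI, blast)
  define \<sigma> where "\<sigma> Us = net (length Us - 1) (last Us)" for Us
  have \<sigma>_U: "\<sigma> (map U [0..<Suc n]) = net n (U n)" for U :: "nat \<Rightarrow> ('a \<Rightarrow> real) set" and n
    by (simp add: \<sigma>_def last_map)
  show ?thesis
    unfolding strictly_H_bounded_Ck_def
  proof (rule exI[of _ \<sigma>], intro allI impI conjI ballI)
    fix U :: "nat \<Rightarrow> ('a \<Rightarrow> real) set" and n assume "\<forall>n. nhd0_k X (U n)"
    then show "finite (\<sigma> (map U [0..<Suc n]))" "\<sigma> (map U [0..<Suc n]) \<subseteq> Cfun X"
      using net[of "U n"] unfolding \<sigma>_U by auto
  next
    fix U :: "nat \<Rightarrow> ('a \<Rightarrow> real) set" and f assume U: "\<forall>n. nhd0_k X (U n)" and f: "f \<in> Cfun X"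
    obtain B where B: "\<And>x. x \<in> topspace X \<Longrightarrow> \<bar>f x\<bar> \<le> B"
      using P f unfolding pseudocompact_def Cfun_def by blast
    have "f \<in> gset_add (net n (U n)) (U n)" if "nat \<lceil>B\<rceil> \<le> n" for n
    proof -
      have "B \<le> real n"
        using that real_nat_ceiling_ge[of B] of_nat_le_iff by (meson order_trans)
      then show ?thesis
        using net[of "U n"] U f B by force
    qed
    then show "\<forall>\<^sub>F n in sequentially. f \<in> gset_add (\<sigma> (map U [0..<Suc n])) (U n)"
      unfolding \<sigma>_U eventually_sequentially by blast
  qed
qed

lemma strictly_H_bounded_Ck_imp_H_bounded_Ck:
  assumes "strictly_H_bounded_Ck X" shows "H_bounded_Ck X"
proof -
  from assms obtain \<sigma> where \<sigma>: "\<forall>U. (\<forall>n. nhd0_k X (U n)) \<longrightarrow>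
      (\<forall>n. finite (\<sigma> (map U [0..<Suc n])) \<and> \<sigma> (map U [0..<Suc n]) \<subseteq> Cfun X) \<and>
      (\<forall>f\<in>Cfun X. \<forall>\<^sub>F n in sequentially. f \<in> gset_add (\<sigma> (map U [0..<Suc n])) (U n))"
    unfolding strictly_H_bounded_Ck_def by (rule exE)
  show ?thesis
    unfolding H_bounded_Ck_def
  proof (intro allI impI)
    fix U :: "nat \<Rightarrow> ('a \<Rightarrow> real) set" assume U: "\<forall>n. nhd0_k X (U n)"
    from mp[OF spec[OF \<sigma>, of U] U] show "\<exists>A. (\<forall>n. finite (A n) \<and> A n \<subseteq> Cfun X) \<and>
        (\<forall>f\<in>Cfun X. \<forall>\<^sub>F n in sequentially. f \<in> gset_add (A n) (U n))"
      by (rule exI[of _ "\<lambda>n. \<sigma> (map U [0..<Suc n])"])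
  qed
qed

lemma strictly_M_bounded_Ck_imp_M_bounded_Ck:
  assumes "strictly_M_bounded_Ck X" shows "M_bounded_Ck X"
proof -
  from assms obtain \<sigma> where \<sigma>: "\<forall>U. (\<forall>n. nhd0_k X (U n)) \<longrightarrow>
      (\<forall>n. finite (\<sigma> (map U [0..<Suc n])) \<and> \<sigma> (map U [0..<Suc n]) \<subseteq> Cfun X) \<and>
      Cfun X = (\<Union>n. gset_add (\<sigma> (map U [0..<Suc n])) (U n))"
    unfolding strictly_M_bounded_Ck_def by (rule exE)
  show ?thesis
    unfolding M_bounded_Ck_def
  proof (intro allI impI)
    fix U :: "nat \<Rightarrow> ('a \<Rightarrow> real) set" assume U: "\<forall>n. nhd0_k X (U n)"
    from mp[OF spec[OF \<sigma>, of U] U] show "\<exists>A. (\<forall>n. finite (A n) \<and> A n \<subseteq> Cfun X) \<and> Cfun X = (\<Union>n. gset_add (A n) (U n))"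
      by (rule exI[of _ "\<lambda>n. \<sigma> (map U [0..<Suc n])"])
  qed
qed

lemma eventual_cover_imp_cover:
  assumes "\<And>n. A n \<subseteq> Cfun X" "\<And>n. nhd0_k X (U n)"
    and "\<forall>f\<in>Cfun X. \<forall>\<^sub>F n in sequentially. f \<in> gset_add (A n) (U n)"
  shows "Cfun X = (\<Union>n. gset_add (A n) (U n))"
proof
  show "Cfun X \<subseteq> (\<Union>n. gset_add (A n) (U n))"
  proof
    fix f assume "f \<in> Cfun X"
    then obtain N where "\<forall>n\<ge>N. f \<in> gset_add (A n) (U n)"
      using assms(3) unfolding eventually_sequentially by blast
    then show "f \<in> (\<Union>n. gset_add (A n) (U n))"
      by blast
  qed
  have "U n \<subseteq> Cfun X" for n
    using assms(2) by (simp add: nhd0_k_def)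
  then show "(\<Union>n. gset_add (A n) (U n)) \<subseteq> Cfun X"
    by (intro UN_least gset_add_subset_Cfun assms(1))
qed

lemma H_bounded_Ck_imp_M_bounded_Ck:
  assumes "H_bounded_Ck X" shows "M_bounded_Ck X"
  unfolding M_bounded_Ck_def
proof (intro allI impI)
  fix U :: "nat \<Rightarrow> ('a \<Rightarrow> real) set" assume U: "\<forall>n. nhd0_k X (U n)"
  from mp[OF spec[OF assms[unfolded H_bounded_Ck_def], of U] U] obtain A
    where A: "\<forall>n. finite (A n) \<and> A n \<subseteq> Cfun X"
      and "\<forall>f\<in>Cfun X. \<forall>\<^sub>F n in sequentially. f \<in> gset_add (A n) (U n)"
    by (elim exE conjE)
  with U have "Cfun X = (\<Union>n. gset_add (A n) (U n))"
    by (intro eventual_cover_imp_cover) simp_all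
  with A show "\<exists>A. (\<forall>n. finite (A n) \<and> A n \<subseteq> Cfun X) \<and> Cfun X = (\<Union>n. gset_add (A n) (U n))"
    by (intro exI[of _ A] conjI)
qed

lemma strictly_H_bounded_Ck_imp_strictly_M_bounded_Ck:
  assumes "strictly_H_bounded_Ck X" shows "strictly_M_bounded_Ck X"
proof -
  from assms obtain \<sigma> where \<sigma>: "\<forall>U. (\<forall>n. nhd0_k X (U n)) \<longrightarrow>
      (\<forall>n. finite (\<sigma> (map U [0..<Suc n])) \<and> \<sigma> (map U [0..<Suc n]) \<subseteq> Cfun X) \<and>
      (\<forall>f\<in>Cfun X. \<forall>\<^sub>F n in sequentially. f \<in> gset_add (\<sigma> (map U [0..<Suc n])) (U n))"
    unfolding strictly_H_bounded_Ck_def by (rule exE)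
  show ?thesis
    unfolding strictly_M_bounded_Ck_def
  proof (rule exI[of _ \<sigma>], intro allI impI)
    fix U :: "nat \<Rightarrow> ('a \<Rightarrow> real) set" assume U: "\<forall>n. nhd0_k X (U n)"
    from mp[OF spec[OF \<sigma>, of U] U]
    have fin: "\<forall>n. finite (\<sigma> (map U [0..<Suc n])) \<and> \<sigma> (map U [0..<Suc n]) \<subseteq> Cfun X"
      and ev: "\<forall>f\<in>Cfun X. \<forall>\<^sub>F n in sequentially. f \<in> gset_add (\<sigma> (map U [0..<Suc n])) (U n)"
      by blast+
    have "Cfun X = (\<Union>n. gset_add (\<sigma> (map U [0..<Suc n])) (U n))"
      using fin U ev by (intro eventual_cover_imp_cover) simp_all
    with fin show "(\<forall>n. finite (\<sigma> (map U [0..<Suc n])) \<and> \<sigma> (map U [0..<Suc n]) \<subseteq> Cfun X) \<and>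
        Cfun X = (\<Union>n. gset_add (\<sigma> (map U [0..<Suc n])) (U n))"
      by (rule conjI)
  qed
qed

lemma sum_nonzero_singleton:
  fixes f :: "'b \<Rightarrow> 'c::comm_monoid_add"
  assumes "\<And>j. j \<noteq> k \<Longrightarrow> f j = 0"
  shows "(\<Sum>j | f j \<noteq> 0. f j) = f k"
proof (cases "f k = 0")
  case True
  with assms have "f j = 0" for j
    by (cases "j = k") auto
  with True show ?thesis by simp
next
  case False
  with assms have "{j. f j \<noteq> 0} = {k}" by auto
  then show ?thesis by simp
qed

lemma sum_nonzero_approx:
  fixes c :: "'b \<Rightarrow> real"
  assumes disj: "\<And>j k. c j \<noteq> 0 \<Longrightarrow> c k \<noteq> 0 \<Longrightarrow> j = k"
    and "finite F" "\<And>k. k \<notin> F \<Longrightarrow> \<bar>c k\<bar> < \<delta>" "\<delta> > 0"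
  shows "\<bar>(\<Sum>k | c k \<noteq> 0. c k) - (\<Sum>k\<in>F. c k)\<bar> < \<delta>"
proof (cases "\<exists>j. c j \<noteq> 0")
  case True
  then obtain j where "c j \<noteq> 0" by blast
  with disj have others: "c k = 0" if "k \<noteq> j" for k
    using that by blast
  then have "(\<Sum>k | c k \<noteq> 0. c k) = c j"
    by (rule sum_nonzero_singleton)
  moreover have "(\<Sum>k\<in>F. c k) = (\<Sum>k\<in>F. if k = j then c j else 0)"
    using others by (intro sum.cong) auto
  ultimately show ?thesis
    using assms(2-4) by auto
next
  case False
  then show ?thesis
    using \<open>\<delta> > 0\<close> by simp
qed

lemma Cfun_sum_disjoint_cozero:
  fixes g :: "nat \<Rightarrow> 'a \<Rightarrow> real"
  assumes g: "\<And>k. g k \<in> Cfun X"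
    and disj: "\<And>j k x. g j x \<noteq> 0 \<Longrightarrow> g k x \<noteq> 0 \<Longrightarrow> j = k"
    and small: "\<And>x \<delta>. x \<in> topspace X \<Longrightarrow> \<delta> > 0 \<Longrightarrow>
      \<exists>W F. openin X W \<and> x \<in> W \<and> finite F \<and> (\<forall>k. k \<notin> F \<longrightarrow> (\<forall>y\<in>W. \<bar>g k y\<bar> < \<delta>))"
  shows "(\<lambda>x. \<Sum>k | g k x \<noteq> 0. g k x) \<in> Cfun X"
proof -
  define f where "f = (\<lambda>x. \<Sum>k | g k x \<noteq> 0. g k x)"
  have "continuous_map X euclideanreal f"
    unfolding Met_TC.continuous_map_to_metric[unfolded mtopology_is_euclidean mball_eq_ball]
  proof (intro ballI allI impI)
    fix x and \<epsilon> :: real assume x: "x \<in> topspace X" and "\<epsilon> > 0"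
    then obtain W F where W: "openin X W" "x \<in> W" and F: "finite F"
      and tail: "\<forall>k. k \<notin> F \<longrightarrow> (\<forall>y\<in>W. \<bar>g k y\<bar> < \<epsilon> / 3)"
      using small[of x "\<epsilon> / 3"] by auto
    define h where "h y = (\<Sum>k\<in>F. g k y)" for y
    have "continuous_map X euclideanreal h"
      unfolding h_def using g F by (auto simp: Cfun_def intro!: continuous_map_sum)
    then have "openin X {y \<in> topspace X. h y \<in> ball (h x) (\<epsilon> / 3)}"
      by (intro openin_continuous_map_preimage) auto
    moreover have "\<bar>f y - f x\<bar> < \<epsilon>" if "y \<in> W" "h y \<in> ball (h x) (\<epsilon> / 3)" for y
    proof -
      have "\<bar>f z - h z\<bar> < \<epsilon> / 3" if "z \<in> W" for z
        unfolding f_def h_def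
        by (rule sum_nonzero_approx[OF _ F]) (use disj tail that \<open>\<epsilon> > 0\<close> in auto)
      then have "\<bar>f y - h y\<bar> < \<epsilon> / 3" "\<bar>f x - h x\<bar> < \<epsilon> / 3"
        using that W by auto
      moreover have "\<bar>h y - h x\<bar> < \<epsilon> / 3"
        using that by (simp add: dist_real_def abs_minus_commute)
      ultimately show ?thesis by linarith
    qed
    ultimately show "\<exists>U. openin X U \<and> x \<in> U \<and> (\<forall>y\<in>U. f y \<in> ball (f x) \<epsilon>)"
      using W x \<open>\<epsilon> > 0\<close>
      by (intro exI[of _ "W \<inter> {y \<in> topspace X. h y \<in> ball (h x) (\<epsilon> / 3)}"])
         (auto simp: dist_real_def abs_minus_commute)
  qed
  moreover have "f x = 0" if "x \<notin> topspace X" for x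
    using g that by (simp add: f_def Cfun_def)
  ultimately show ?thesis
    unfolding f_def[symmetric] Cfun_def by blast
qed

lemma Cfun_sum_bumps:
  fixes \<phi> :: "nat \<Rightarrow> 'a \<Rightarrow> real" and s :: "nat \<Rightarrow> real"
  assumes \<phi>: "\<And>k. \<phi> k \<in> Cfun X" "\<And>k. \<phi> k (x k) = 1"
    and disj: "\<And>j k y. \<phi> j y \<noteq> 0 \<Longrightarrow> \<phi> k y \<noteq> 0 \<Longrightarrow> j = k"
    and small: "\<And>y \<delta>. y \<in> topspace X \<Longrightarrow> \<delta> > 0 \<Longrightarrow>
      \<exists>W F. openin X W \<and> y \<in> W \<and> finite F \<and> (\<forall>k. k \<notin> F \<longrightarrow> (\<forall>z\<in>W. \<bar>s k * \<phi> k z\<bar> < \<delta>))"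
  shows "\<exists>f\<in>Cfun X. \<forall>k. f (x k) = s k"
proof -
  define g where "g k y = s k * \<phi> k y" for k y
  show ?thesis
  proof (intro bexI allI)
    show "(\<lambda>y. \<Sum>k | g k y \<noteq> 0. g k y) \<in> Cfun X"
    proof (rule Cfun_sum_disjoint_cozero)
      show "g k \<in> Cfun X" for k
        unfolding g_def by (rule Cfun_cmult[OF \<phi>(1)])
      show "j = k" if "g j y \<noteq> 0" "g k y \<noteq> 0" for j k y
        using that by (auto simp: g_def intro: disj)
      show "\<exists>W F. openin X W \<and> y \<in> W \<and> finite F \<and> (\<forall>k. k \<notin> F \<longrightarrow> (\<forall>z\<in>W. \<bar>g k z\<bar> < \<delta>))"
        if "y \<in> topspace X" "\<delta> > 0" for y \<delta>
        unfolding g_def by (rule small[OF that])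
    qed
  next
    fix k
    have "g j (x k) = 0" if "j \<noteq> k" for j
      using disj[of j "x k" k] \<phi>(2) that by (auto simp: g_def)
    then have "(\<Sum>j | g j (x k) \<noteq> 0. g j (x k)) = g k (x k)"
      by (rule sum_nonzero_singleton)
    then show "(\<Sum>j | g j (x k) \<noteq> 0. g j (x k)) = s k"
      using \<phi>(2) by (simp add: g_def)
  qed
qed

lemma M_bounded_Ck_basic_cover:
  fixes K :: "nat \<Rightarrow> 'a set" and \<epsilon> :: "nat \<Rightarrow> real"
  assumes M: "M_bounded_Ck X" and K: "\<And>n. compactin X (K n)" and \<epsilon>: "\<And>n. \<epsilon> n > 0"
  obtains A where "\<And>n. finite (A n)"
    "\<And>f. f \<in> Cfun X \<Longrightarrow> \<exists>n. \<exists>a\<in>A n. \<forall>x\<in>K n. \<bar>f x - a x\<bar> < \<epsilon> n"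
proof -
  define U where "U n = {g \<in> Cfun X. \<forall>x\<in>K n. \<bar>g x\<bar> < \<epsilon> n}" for n
  have "\<forall>n. nhd0_k X (U n)"
    unfolding U_def using nhd0_k_basic K \<epsilon> by blast
  from mp[OF spec[OF M[unfolded M_bounded_Ck_def], of U] this] obtain A
    where A: "\<forall>n. finite (A n) \<and> A n \<subseteq> Cfun X" and cover: "Cfun X = (\<Union>n. gset_add (A n) (U n))"
    by (elim exE conjE)
  show ?thesis
  proof (rule that)
    show "finite (A n)" for n
      using A by blast
    fix f assume "f \<in> Cfun X"
    with cover obtain n where "f \<in> gset_add (A n) (U n)"
      by blast
    then obtain a where "a \<in> A n" "(\<lambda>x. f x - a x) \<in> U n"
      by (rule gset_addE)
    then show "\<exists>n. \<exists>a\<in>A n. \<forall>x\<in>K n. \<bar>f x - a x\<bar> < \<epsilon> n"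
      unfolding U_def by blast
  qed
qed

lemma unbounded_separated_sequence:
  fixes h :: "'a \<Rightarrow> real"
  assumes "\<And>B. \<exists>x\<in>S. B < h x"
  obtains p where "\<And>k. p k \<in> S" "\<And>k. 2 * real k \<le> h (p k)" "\<And>j k. j < k \<Longrightarrow> h (p j) + 2 \<le> h (p k)"
proof -
  have "\<exists>p. \<forall>n. (p n \<in> S \<and> 2 * real n \<le> h (p n)) \<and> h (p n) + 2 \<le> h (p (Suc n))"
  proof (rule dependent_nat_choice)
    show "\<exists>x. x \<in> S \<and> 2 * real 0 \<le> h x"
      using assms[of 0] by force
    show "\<exists>y. (y \<in> S \<and> 2 * real (Suc n) \<le> h y) \<and> h x + 2 \<le> h y"
      if "x \<in> S \<and> 2 * real n \<le> h x" for x n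
      using assms[of "h x + 2"] that by force
  qed
  then obtain p where p: "\<And>n. p n \<in> S" "\<And>n. 2 * real n \<le> h (p n)"
    and step: "\<And>n. h (p n) + 2 \<le> h (p (Suc n))"
    by blast
  have "h (p j) + 2 \<le> h (p k)" if "j < k" for j k
    using that
  proof (induction k rule: less_Suc_induct)
    case (1 i)
    then show ?case by (rule step)
  next
    case (2 i j k)
    then show ?case by linarith
  qed
  with p that show ?thesis
    by blast
qed

lemma Cfun_tent:
  assumes "continuous_map X euclideanreal h"
  shows "(\<lambda>y. if y \<in> topspace X then max 0 (1 - \<bar>h y - c\<bar>) else 0) \<in> Cfun X"
proof -
  have "continuous_map X euclideanreal (\<lambda>y. max 0 (1 - \<bar>h y - c\<bar>))"
    using assms by (intro continuous_intros) auto
  then have "continuous_map X euclideanreal (\<lambda>y. if y \<in> topspace X then max 0 (1 - \<bar>h y - c\<bar>) else 0)"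
    by (rule continuous_map_eq) simp
  then show ?thesis
    by (simp add: Cfun_def)
qed

lemma M_bounded_Ck_imp_pseudocompact:
  assumes M: "M_bounded_Ck X"
  shows "pseudocompact X"
proof (rule ccontr)
  assume "\<not> pseudocompact X"
  then obtain h0 where h0: "continuous_map X euclideanreal h0"
    and unbounded: "\<And>B. \<exists>x\<in>topspace X. B < \<bar>h0 x\<bar>"
    unfolding pseudocompact_def by (meson not_le)
  define h where "h x = \<bar>h0 x\<bar>" for x
  have h: "continuous_map X euclideanreal h"
    unfolding h_def using h0 by (rule continuous_map_real_abs)
  have h_unbounded: "\<exists>x\<in>topspace X. B < h x" for B
    unfolding h_def by (rule unbounded)
  obtain p where p: "\<And>k. p k \<in> topspace X" and p_large: "\<And>k. 2 * real k \<le> h (p k)"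
    and p_sep: "\<And>j k. j < k \<Longrightarrow> h (p j) + 2 \<le> h (p k)"
    by (fact unbounded_separated_sequence[OF h_unbounded])
  \<comment> \<open>Tents of height 1 around the values h (p k), which are 2 apart.\<close>
  define \<phi> where "\<phi> k y = (if y \<in> topspace X then max 0 (1 - \<bar>h y - h (p k)\<bar>) else 0)" for k y
  have \<phi>_Cfun: "\<phi> k \<in> Cfun X" for k
    unfolding \<phi>_def using h by (rule Cfun_tent)
  have \<phi>_nonzero: "\<bar>h y - h (p k)\<bar> < 1" if "\<phi> k y \<noteq> 0" for k y
    using that by (auto simp: \<phi>_def split: if_splits)
  obtain A where A: "\<And>n. finite (A n)"
    and cover: "\<And>f. f \<in> Cfun X \<Longrightarrow> \<exists>n. \<exists>a\<in>A n. \<forall>x\<in>{p n}. \<bar>f x - a x\<bar> < 1"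
    using M_bounded_Ck_basic_cover[OF M, of "\<lambda>n. {p n}" "\<lambda>_. 1"] p by auto
  define s where "s n = 1 + (\<Sum>a\<in>A n. \<bar>a (p n)\<bar>)" for n
  have "\<exists>f\<in>Cfun X. \<forall>k. f (p k) = s k"
  proof (rule Cfun_sum_bumps)
    show "\<phi> k \<in> Cfun X" "\<phi> k (p k) = 1" for k
      using \<phi>_Cfun p by (simp_all add: \<phi>_def)
    show "j = k" if "\<phi> j y \<noteq> 0" "\<phi> k y \<noteq> 0" for j k y
      using \<phi>_nonzero[OF that(1)] \<phi>_nonzero[OF that(2)] p_sep[of j k] p_sep[of k j]
      by (cases j k rule: linorder_cases) auto
    fix x and \<delta> :: real assume "x \<in> topspace X" "\<delta> > 0"
    \<comment> \<open>Near x the function h stays below h x + 1, which only finitely many h (p k) come close to.\<close>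
    let ?W = "{y \<in> topspace X. h y \<in> {..<h x + 1}}"
    have "\<phi> k y = 0" if "k \<notin> {..nat \<lceil>h x\<rceil> + 1}" "y \<in> ?W" for k y
    proof -
      from that(1) have "real (nat \<lceil>h x\<rceil> + 1) < real k"
        by simp
      then have "h x + 1 < real k"
        using real_nat_ceiling_ge[of "h x"] by linarith
      then have "1 \<le> \<bar>h y - h (p k)\<bar>"
        using p_large[of k] that(2) by (auto simp: h_def)
      then show ?thesis
        using \<phi>_nonzero by force
    qed
    moreover have "openin X ?W"
      using h by (intro openin_continuous_map_preimage) auto
    ultimately show "\<exists>W F. openin X W \<and> x \<in> W \<and> finite F \<and>
        (\<forall>k. k \<notin> F \<longrightarrow> (\<forall>z\<in>W. \<bar>s k * \<phi> k z\<bar> < \<delta>))"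
      using \<open>x \<in> topspace X\<close> \<open>\<delta> > 0\<close> by (intro exI[of _ ?W] exI[of _ "{..nat \<lceil>h x\<rceil> + 1}"]) auto
  qed
  then obtain f where "f \<in> Cfun X" and f: "\<And>k. f (p k) = s k"
    by blast
  then obtain n a where "a \<in> A n" and "\<bar>s n - a (p n)\<bar> < 1"
    using cover f by fastforce
  moreover have "\<bar>a (p n)\<bar> \<le> (\<Sum>a\<in>A n. \<bar>a (p n)\<bar>)"
    using A \<open>a \<in> A n\<close> by (intro member_le_sum) auto
  ultimately show False
    by (simp add: s_def)
qed

lemma finite_large_values_prod_encode:
  fixes s :: "nat \<Rightarrow> real" and m :: "nat \<Rightarrow> nat"
  assumes "\<And>n i. m n \<le> i \<Longrightarrow> s (prod_encode (n, i)) = 0"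
    and "\<And>n i. \<bar>s (prod_encode (n, i))\<bar> \<le> 2 / real (Suc n)"
    and "\<delta> > 0"
  shows "finite {k. \<delta> \<le> \<bar>s k\<bar>}"
proof (rule finite_subset)
  define N where "N = nat \<lceil>2 / \<delta>\<rceil>"
  show "finite (prod_encode ` (SIGMA n:{..N}. {..<m n}))"
    by auto
  show "{k. \<delta> \<le> \<bar>s k\<bar>} \<subseteq> prod_encode ` (SIGMA n:{..N}. {..<m n})"
  proof
    fix k assume k: "k \<in> {k. \<delta> \<le> \<bar>s k\<bar>}"
    obtain n i where ni: "k = prod_encode (n, i)"
      by (metis prod_decode_inverse surj_pair)
    have "i < m n"
      using k assms(1)[of n i] \<open>\<delta> > 0\<close> by (force simp: ni)
    moreover have "n \<le> N"
    proof -
      have "\<delta> \<le> 2 / real (Suc n)"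
        using k assms(2)[of n i] by (simp add: ni)
      then have "real (Suc n) \<le> 2 / \<delta>"
        using \<open>\<delta> > 0\<close> by (simp add: field_simps)
      then show ?thesis
        unfolding N_def by linarith
    qed
    ultimately show "k \<in> prod_encode ` (SIGMA n:{..N}. {..<m n})"
      using ni by blast
  qed
qed

lemma derived_set_of_separate:
  assumes "Hausdorff_space X" "p \<in> X derived_set_of K" "openin X W" "p \<in> W"
  obtains x V W' where "x \<in> K" "x \<in> V" "openin X V" "V \<subseteq> W"
    "openin X W'" "p \<in> W'" "W' \<subseteq> W" "disjnt V W'"
proof -
  obtain x where x: "x \<in> K" "x \<in> W" "x \<noteq> p"
    using assms(2-4) unfolding derived_set_of_def by blast
  moreover have "x \<in> topspace X" "p \<in> topspace X"
    using assms(3) x(2) \<open>p \<in> W\<close> openin_subset by auto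
  ultimately obtain V1 W1 where "openin X V1" "openin X W1" "x \<in> V1" "p \<in> W1" "disjnt V1 W1"
    using assms(1) unfolding Hausdorff_space_def by metis
  then show ?thesis
    using that[of x "V1 \<inter> W" "W1 \<inter> W"] assms(3,4) x by (auto simp: disjnt_def)
qed

lemma disjoint_family_if_nested:
  assumes "\<And>n. disjnt (V n) (W n)" "\<And>n. V (Suc n) \<subseteq> W n" "\<And>n. W (Suc n) \<subseteq> W n"
  shows "disjoint_family V"
proof -
  have W_anti: "W k \<subseteq> W j" if "j \<le> k" for j k
    using that
  proof (induction k rule: dec_induct)
    case (step k)
    then show ?case
      using assms(3)[of k] by blast
  qed simp
  have "disjnt (V j) (V k)" if "j < k" for j k
  proof -
    obtain m where "k = Suc m" "j \<le> m"
      using \<open>j < k\<close> by (metis less_Suc_eq_le less_imp_Suc_add)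
    then have "V k \<subseteq> W j"
      using assms(2)[of m] W_anti[of j m] by blast
    then show ?thesis
      using assms(1)[of j] by (auto simp: disjnt_def)
  qed
  then show ?thesis
    unfolding disjoint_family_on_def disjnt_def by (metis Int_commute linorder_neqE_nat)
qed

lemma derived_set_of_disjoint_open_sequence:
  assumes "Hausdorff_space X" "p \<in> X derived_set_of K"
  obtains x :: "nat \<Rightarrow> 'a" and V :: "nat \<Rightarrow> 'a set"
  where "\<And>k. x k \<in> K" "\<And>k. x k \<in> V k" "\<And>k. openin X (V k)" "disjoint_family V"
proof -
  \<comment> \<open>Each step shrinks the open neighbourhood W of p that is kept clear of all earlier sets V.\<close>
  define P where "P n VW \<longleftrightarrow> (case VW of (V, W) \<Rightarrow>
      V \<inter> K \<noteq> {} \<and> openin X V \<and> openin X W \<and> p \<in> W \<and> disjnt V W)" for n :: nat and VW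
  define Q where "Q n VW VW' \<longleftrightarrow> fst VW' \<subseteq> snd VW \<and> snd VW' \<subseteq> snd VW"
    for n :: nat and VW VW' :: "'a set \<times> 'a set"
  have split: "\<exists>VW'. P n VW' \<and> fst VW' \<subseteq> W \<and> snd VW' \<subseteq> W" if W: "openin X W" "p \<in> W" for n W
  proof -
    obtain x V W' where "x \<in> K" "x \<in> V" "openin X V" "V \<subseteq> W" "openin X W'" "p \<in> W'" "W' \<subseteq> W"
      "disjnt V W'"
      using derived_set_of_separate[OF assms W] .
    then have "P n (V, W') \<and> fst (V, W') \<subseteq> W \<and> snd (V, W') \<subseteq> W"
      unfolding P_def by auto
    then show ?thesis ..
  qed
  have "p \<in> topspace X"
    using assms(2) by (simp add: derived_set_of_def)
  then have "\<exists>VW. P 0 VW"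
    using split[of "topspace X" 0] by blast
  moreover have "\<exists>VW'. P (Suc n) VW' \<and> Q n VW VW'" if "P n VW" for n VW
    using that split[of "snd VW" "Suc n"] unfolding P_def Q_def by (auto split: prod.splits)
  ultimately obtain VW where P: "\<And>n. P n (VW n)" and Q: "\<And>n. Q n (VW n) (VW (Suc n))"
    using dependent_nat_choice[of P Q] by blast
  define V where "V n = fst (VW n)" for n
  define W where "W n = snd (VW n)" for n
  have PV: "V n \<inter> K \<noteq> {}" "openin X (V n)" "disjnt (V n) (W n)" for n
    using P[of n] by (auto simp: P_def V_def W_def split: prod.splits)
  have "disjoint_family V"
    using PV(3) Q by (intro disjoint_family_if_nested[of V W]) (simp_all add: Q_def V_def W_def)
  moreover have "\<forall>k. \<exists>y. y \<in> V k \<inter> K"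
    using PV(1) by blast
  then obtain x where "\<forall>k. x k \<in> V k \<inter> K"
    by metis
  ultimately show ?thesis
    using that[of x V] PV(2) by blast
qed

lemma completely_regular_disjoint_bumps:
  fixes x :: "nat \<Rightarrow> 'a"
  assumes X: "completely_regular_space X" and V: "\<And>k. openin X (V k)" "\<And>k. x k \<in> V k"
    and disj: "disjoint_family V"
  obtains \<phi> where "\<And>k. \<phi> k \<in> Cfun X" "\<And>k. \<phi> k (x k) = 1" "\<And>k y. \<bar>\<phi> k y\<bar> \<le> 1"
    "\<And>j k y. \<phi> j y \<noteq> 0 \<Longrightarrow> \<phi> k y \<noteq> 0 \<Longrightarrow> j = k"
proof -
  have "\<exists>\<phi>. \<phi> \<in> Cfun X \<and> \<phi> (x k) = 1 \<and> (\<forall>y. y \<notin> V k \<longrightarrow> \<phi> y = 0) \<and> (\<forall>y. \<bar>\<phi> y\<bar> \<le> 1)" for k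
    by (rule completely_regular_bump[OF X V]) blast
  then obtain \<phi> where \<phi>: "\<And>k. \<phi> k \<in> Cfun X" "\<And>k. \<phi> k (x k) = 1"
    "\<And>k y. y \<notin> V k \<Longrightarrow> \<phi> k y = 0" "\<And>k y. \<bar>\<phi> k y\<bar> \<le> 1"
    by metis
  moreover have sep: "j = k" if "\<phi> j y \<noteq> 0" "\<phi> k y \<noteq> 0" for j k y
  proof -
    have "y \<in> V j \<inter> V k"
      using that \<phi>(3) by blast
    then show ?thesis
      using disj by (auto simp: disjoint_family_on_def)
  qed
  ultimately show ?thesis
    using that[of \<phi>] by blast
qed

lemma M_bounded_Ck_imp_finite_compactin:
  assumes X: "completely_regular_space X" "Hausdorff_space X" and M: "M_bounded_Ck X"
    and K: "compactin X K"
  shows "finite K"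
proof (rule ccontr)
  assume "infinite K"
  then obtain p where p: "p \<in> X derived_set_of K"
    using compactin_imp_Bolzano_Weierstrass[OF K] by blast
  obtain x :: "nat \<Rightarrow> 'a" and V where xK: "\<And>k. x k \<in> K" and xV: "\<And>k. x k \<in> V k"
    and V: "\<And>k. openin X (V k)" and disj: "disjoint_family V"
    by (fact derived_set_of_disjoint_open_sequence[OF X(2) p])
  obtain \<phi> where \<phi>: "\<And>k. \<phi> k \<in> Cfun X" "\<And>k. \<phi> k (x k) = 1" "\<And>k y. \<bar>\<phi> k y\<bar> \<le> 1"
    and \<phi>_disjoint: "\<And>j k y. \<phi> j y \<noteq> 0 \<Longrightarrow> \<phi> k y \<noteq> 0 \<Longrightarrow> j = k"
    by (fact completely_regular_disjoint_bumps[OF X(1) V xV disj])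
  define \<epsilon> where "\<epsilon> n = 1 / real (Suc n)" for n
  have \<epsilon>_pos: "\<epsilon> n > 0" for n
    by (simp add: \<epsilon>_def)
  obtain A where "\<And>n. finite (A n)"
    and cover: "\<And>f. f \<in> Cfun X \<Longrightarrow> \<exists>n. \<exists>a\<in>A n. \<forall>z\<in>K. \<bar>f z - a z\<bar> < \<epsilon> n"
    using M_bounded_Ck_basic_cover[OF M, of "\<lambda>_. K" \<epsilon>] K \<epsilon>_pos by auto
  then have "\<exists>l. set l = A n" for n
    by (simp add: finite_list)
  then obtain L where L: "\<And>n. set (L n) = A n"
    by metis
  \<comment> \<open>Diagonalisation: the point x k with k = \<langle>n, i\<rangle> defeats the i-th element of A n.\<close>
  define s where "s k = (case prod_decode k of (n, i) \<Rightarrow>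
      if i < length (L n) \<and> \<bar>(L n ! i) (x k)\<bar> < \<epsilon> n then 2 * \<epsilon> n else 0)" for k
  have "\<exists>f\<in>Cfun X. \<forall>k. f (x k) = s k"
  proof (rule Cfun_sum_bumps)
    show "\<phi> k \<in> Cfun X" "\<phi> k (x k) = 1" for k
      by (fact \<phi>(1), fact \<phi>(2))
    show "j = k" if "\<phi> j y \<noteq> 0" "\<phi> k y \<noteq> 0" for j k y
      using that by (rule \<phi>_disjoint)
    fix y and \<delta> :: real assume "y \<in> topspace X" "\<delta> > 0"
    have "finite {k. \<delta> \<le> \<bar>s k\<bar>}"
      by (rule finite_large_values_prod_encode[where m = "\<lambda>n. length (L n)", OF _ _ \<open>\<delta> > 0\<close>])
        (auto simp: s_def \<epsilon>_def)
    moreover have "\<bar>s k * \<phi> k z\<bar> < \<delta>" if "k \<notin> {k. \<delta> \<le> \<bar>s k\<bar>}" for k z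
    proof -
      have "\<bar>s k * \<phi> k z\<bar> \<le> \<bar>s k\<bar>"
        using \<phi>(3)[of k z] by (simp add: abs_mult mult_left_le)
      then show ?thesis
        using that by simp
    qed
    ultimately show "\<exists>W F. openin X W \<and> y \<in> W \<and> finite F \<and>
        (\<forall>k. k \<notin> F \<longrightarrow> (\<forall>z\<in>W. \<bar>s k * \<phi> k z\<bar> < \<delta>))"
      using \<open>y \<in> topspace X\<close>
      by (intro exI[of _ "topspace X"] exI[of _ "{k. \<delta> \<le> \<bar>s k\<bar>}"]) simp
  qed
  then obtain f where "f \<in> Cfun X" and f: "\<And>k. f (x k) = s k"
    by blast
  then obtain n a where "a \<in> A n" and close: "\<forall>z\<in>K. \<bar>f z - a z\<bar> < \<epsilon> n"
    using cover by blast
  then obtain i where i: "i < length (L n)" "L n ! i = a"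
    using L by (metis in_set_conv_nth)
  define k where "k = prod_encode (n, i)"
  have "s k = (if \<bar>a (x k)\<bar> < \<epsilon> n then 2 * \<epsilon> n else 0)"
    using i by (simp add: s_def k_def)
  then show False
    using close xK[of k] f[of k] \<epsilon>_pos[of n] by (auto split: if_splits)
qed

theorem theorem2p6:
  fixes X :: "'a topology"
  assumes "tychonoff_space X"
  shows "(strictly_H_bounded_Ck X \<longleftrightarrow> H_bounded_Ck X) \<and>
         (H_bounded_Ck X \<longleftrightarrow> strictly_M_bounded_Ck X) \<and>
         (strictly_M_bounded_Ck X \<longleftrightarrow> M_bounded_Ck X) \<and>
         (M_bounded_Ck X \<longleftrightarrow>
            (pseudocompact X \<and> (\<forall>K. compactin X K \<longrightarrow> finite K)))"
proof -
  have X: "completely_regular_space X" "Hausdorff_space X"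
    using assms by (simp_all add: tychonoff_space_def)
  have "M_bounded_Ck X \<Longrightarrow> pseudocompact X \<and> (\<forall>K. compactin X K \<longrightarrow> finite K)"
    using M_bounded_Ck_imp_pseudocompact M_bounded_Ck_imp_finite_compactin[OF X] by blast
  moreover have "pseudocompact X \<and> (\<forall>K. compactin X K \<longrightarrow> finite K) \<Longrightarrow> strictly_H_bounded_Ck X"
    using pseudocompact_finite_compacts_imp_strictly_H_bounded_Ck[OF assms] by blast
  ultimately show ?thesis
    using strictly_H_bounded_Ck_imp_H_bounded_Ck H_bounded_Ck_imp_M_bounded_Ck
      strictly_H_bounded_Ck_imp_strictly_M_bounded_Ck strictly_M_bounded_Ck_imp_M_bounded_Ck
    by blast
qed

end
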